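(* In the production planning setting described in the context (general case, intervals may overlap), for every fixed $\pmb{x}\in\mathbb{X}$ the adversarial problem $\max_{\pmb{D}\in\mathcal{U}^d}\sum_{t\in[T]}\max\{f_I(X_t,D_t),f_B(X_t,D_t)\}$ has an optimal solution $\pmb{D}^*\in\mathcal{U}^d$ such that for every $k\in[T]$, $$D^*_k\in\mathcal{D}_k=[\widehat{D}_k-\Delta_k,\widehat{D}_k+\Delta_k]\cap\bigcup_{t\in[T]}\{\widehat{D}_t-\Delta_t,\widehat{D}_t,\widehat{D}_t+\Delta_t\}.$$
   Context: There are $T\ge 1$ periods, $[T]=\{1,\dots,T\}$. Given are a production cost $c^P$, an inventory cost $c^I$, a backordering cost $c^B$ and a selling price $b^P$ (independent of the period), and a set $\mathbb{X}\subseteq\mathbb{R}^T_+$ of feasible production plans $\pmb{x}=(x_1,\dots,x_T)$ described by finitely many linear constraints. For a plan write $X_t=\sum_{i\in[t]}x_i$. For $t\in[T-1]$ let $f_I(X_t,D_t)=c^I(X_t-D_t)$ and $f_B(X_t,D_t)=c^B(D_t-X_t)$; for $t=T$ let $f_I(X_T,D_T)=c^I(X_T-D_T)+c^PX_T-b^PD_T$ and $f_B(X_T,D_T)=c^B(D_T-X_T)+c^PX_T-b^PX_T$. Nominal cumulative demands $\widehat{D}_t\ge 0$ satisfy $\widehat{D}_t\le\widehat{D}_{t+1}$, and deviations satisfy $0\le\Delta_t\le\widehat{D}_t$. The discrete budgeted scenario set is $\mathcal{U}^d=\{\pmb{D}\in\mathbb{R}^T: D_t\le D_{t+1}\ (t\in[T-1]),\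 D_t\in[\widehat{D}_t-\Delta_t,\widehat{D}_t+\Delta_t]\ (t\in[T]),\ |\{t: D_t\ne\widehat{D}_t\}|\le\Gamma^d\}$ with integer $\Gamma^d\in\{0,\dots,T\}$. No non-overlapping assumption on the intervals is made. *)

theory Defs
  imports "HOL-Analysis.Analysis"
begin

text \<open>Vectors indexed by periods 1..T are modelled as functions nat => real;
  only the values at 1..T matter.\<close>

definition plan_set :: "nat \<Rightarrow> nat \<Rightarrow> (nat \<Rightarrow> nat \<Rightarrow> real) \<Rightarrow> (nat \<Rightarrow> real) \<Rightarrow> (nat \<Rightarrow> real) set" where
  "plan_set T m A b = {x. (\<forall>t\<in>{1..T}. 0 \<le> x t) \<and>
       (\<forall>j<m. (\<Sum>i=1..T. A j i * x i) \<le> b j)}"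

definition cumX :: "(nat \<Rightarrow> real) \<Rightarrow> nat \<Rightarrow> real" where
  "cumX x t = (\<Sum>i=1..t. x i)"

definition fI :: "nat \<Rightarrow> real \<Rightarrow> real \<Rightarrow> real \<Rightarrow> nat \<Rightarrow> real \<Rightarrow> real \<Rightarrow> real" where
  "fI T cP cI bP t X D =
     (if t < T then cI * (X - D) else cI * (X - D) + cP * X - bP * D)"

definition fB :: "nat \<Rightarrow> real \<Rightarrow> real \<Rightarrow> real \<Rightarrow> nat \<Rightarrow> real \<Rightarrow> real \<Rightarrow> real" where
  "fB T cP cB bP t X D =
     (if t < T then cB * (D - X) else cB * (D - X) + cP * X - bP * X)"

definition total_cost ::
  "nat \<Rightarrow> real \<Rightarrow> real \<Rightarrow> real \<Rightarrow> real \<Rightarrow> (nat \<Rightarrow> real) \<Rightarrow> (nat \<Rightarrow> real) \<Rightarrow> real" where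
  "total_cost T cP cI cB bP x D =
     (\<Sum>t=1..T. max (fI T cP cI bP t (cumX x t) (D t)) (fB T cP cB bP t (cumX x t) (D t)))"

definition Ud :: "nat \<Rightarrow> (nat \<Rightarrow> real) \<Rightarrow> (nat \<Rightarrow> real) \<Rightarrow> nat \<Rightarrow> (nat \<Rightarrow> real) set" where
  "Ud T Dhat Delta Gam = {D.
      (\<forall>t\<in>{1..<T}. D t \<le> D (t + 1)) \<and>
      (\<forall>t\<in>{1..T}. Dhat t - Delta t \<le> D t \<and> D t \<le> Dhat t + Delta t) \<and>
      card {t\<in>{1..T}. D t \<noteq> Dhat t} \<le> Gam}"

definition cand :: "nat \<Rightarrow> (nat \<Rightarrow> real) \<Rightarrow> (nat \<Rightarrow> real) \<Rightarrow> nat \<Rightarrow> real set" where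
  "cand T Dhat Delta k = {Dhat k - Delta k .. Dhat k + Delta k} \<inter>
      (\<Union>t\<in>{1..T}. {Dhat t - Delta t, Dhat t, Dhat t + Delta t})"

end

theory Submission
  imports Defs
begin

text \<open>For a fixed plan the objective is a sum over periods of convex functions of the single
  demands \<open>D t\<close>, each a maximum of two affine functions. Suppose a feasible scenario \<open>D\<close> takes
  a value \<open>v\<close> outside the finite set of critical values \<open>Dhat t\<close>, \<open>Dhat t \<plusminus> Delta t\<close>.
  Moving all periods with \<open>D t = v\<close> simultaneously to a common value \<open>s\<close> makes the objective a
  convex function of \<open>s\<close>, and the scenario stays feasible as long as \<open>s\<close> does not cross a
  critical value or another value of \<open>D\<close>. Hence one of the two nearest such values below and
  above \<open>v\<close> is at least as good, and using it removes \<open>v\<close> without creating a new off-critical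
  value. Iterating, every scenario is dominated by one with critical values only, and among
  these finitely many a best one exists.\<close>

lemma convex_on_max [intro]:
  assumes "convex_on S f" "convex_on S g"
  shows "convex_on S (\<lambda>x. max (f x) (g x))"
proof (rule convex_onI)
  show "convex S" using assms(1) by (rule convex_on_imp_convex)
next
  fix t :: real and x y assume t: "0 < t" "t < 1" and xy: "x \<in> S" "y \<in> S"
  have "f ((1 - t) *\<^sub>R x + t *\<^sub>R y) \<le> (1 - t) * max (f x) (g x) + t * max (f y) (g y)"
    using convex_onD[OF assms(1), of t x y] t xy
    by (smt (verit) max.cobounded1 max.cobounded2 mult_left_mono)
  moreover have "g ((1 - t) *\<^sub>R x + t *\<^sub>R y) \<le> (1 - t) * max (f x) (g x) + t * max (f y) (g y)"
    using convex_onD[OF assms(2), of t x y] t xy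
    by (smt (verit) max.cobounded1 max.cobounded2 mult_left_mono)
  ultimately show "max (f ((1 - t) *\<^sub>R x + t *\<^sub>R y)) (g ((1 - t) *\<^sub>R x + t *\<^sub>R y))
      \<le> (1 - t) * max (f x) (g x) + t * max (f y) (g y)"
    by simp
qed

lemma convex_on_sum_functions:
  assumes "finite I" "convex S" "\<And>i. i \<in> I \<Longrightarrow> convex_on S (f i)"
  shows "convex_on S (\<lambda>x. \<Sum>i\<in>I. f i x)"
  using assms by (induction I rule: finite_induct) (auto simp: convex_on_const)

lemma convex_on_fI: "convex_on UNIV (fI T cP cI bP t X)"
  by (rule convex_on_linorderI) (auto simp: fI_def algebra_simps)

lemma convex_on_fB: "convex_on UNIV (fB T cP cB bP t X)"
  by (rule convex_on_linorderI) (auto simp: fB_def algebra_simps)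

definition replace_value :: "('a \<Rightarrow> 'b) \<Rightarrow> 'b \<Rightarrow> 'b \<Rightarrow> 'a \<Rightarrow> 'b" where
  "replace_value D v s = (\<lambda>t. if D t = v then s else D t)"

lemma replace_value_self [simp]: "replace_value D v v = D"
  by (auto simp: replace_value_def)

lemma finite_has_nearest_below:
  fixes W :: "'a :: linorder set"
  assumes "finite W" "a \<in> W" "a < v"
  obtains lo where "lo \<in> W" "lo < v" "\<And>w. w \<in> W \<Longrightarrow> w < v \<Longrightarrow> w \<le> lo"
proof
  let ?L = "{w\<in>W. w < v}"
  have "finite ?L" "?L \<noteq> {}" using assms by auto
  then show "Max ?L \<in> W" "Max ?L < v" "\<And>w. w \<in> W \<Longrightarrow> w < v \<Longrightarrow> w \<le> Max ?L"
    using Max_in[of ?L] by auto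
qed

lemma finite_has_nearest_above:
  fixes W :: "'a :: linorder set"
  assumes "finite W" "a \<in> W" "v < a"
  obtains up where "up \<in> W" "v < up" "\<And>w. w \<in> W \<Longrightarrow> v < w \<Longrightarrow> up \<le> w"
proof
  let ?U = "{w\<in>W. v < w}"
  have "finite ?U" "?U \<noteq> {}" using assms by auto
  then show "Min ?U \<in> W" "v < Min ?U" "\<And>w. w \<in> W \<Longrightarrow> v < w \<Longrightarrow> Min ?U \<le> w"
    using Min_in[of ?U] by auto
qed

context
  fixes T :: nat and Dhat Delta :: "nat \<Rightarrow> real" and Gam :: nat
    and cP cI cB bP :: real and x :: "nat \<Rightarrow> real"
begin

abbreviation (input) cost :: "(nat \<Rightarrow> real) \<Rightarrow> real" where
  "cost \<equiv> total_cost T cP cI cB bP x"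

abbreviation (input) scenarios :: "(nat \<Rightarrow> real) set" where
  "scenarios \<equiv> Ud T Dhat Delta Gam"

definition critical_values :: "real set" where
  "critical_values = (\<Union>t\<in>{1..T}. {Dhat t - Delta t, Dhat t, Dhat t + Delta t})"

definition off_values :: "(nat \<Rightarrow> real) \<Rightarrow> real set" where
  "off_values D = D ` {1..T} - critical_values"

lemma finite_critical_values: "finite critical_values"
  by (auto simp: critical_values_def)

lemma finite_off_values: "finite (off_values D)"
  by (auto simp: off_values_def)

lemma critical_values_memI:
  "t \<in> {1..T} \<Longrightarrow> Dhat t - Delta t \<in> critical_values"
  "t \<in> {1..T} \<Longrightarrow> Dhat t \<in> critical_values"
  "t \<in> {1..T} \<Longrightarrow> Dhat t + Delta t \<in> critical_values"
  by (auto simp: critical_values_def)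

lemma convex_on_cost_replace_value:
  "convex_on UNIV (\<lambda>s. cost (replace_value D v s))"
  unfolding total_cost_def replace_value_def
proof (intro convex_on_sum_functions)
  fix t
  show "convex_on UNIV (\<lambda>s. max (fI T cP cI bP t (cumX x t) (if D t = v then s else D t))
                                 (fB T cP cB bP t (cumX x t) (if D t = v then s else D t)))"
    by (cases "D t = v") (auto simp: convex_on_fI convex_on_fB convex_on_const)
qed auto

lemma replace_value_mem_scenarios:
  assumes D: "D \<in> scenarios" and v: "v \<notin> critical_values"
    and below: "\<And>w. w \<in> critical_values \<union> D ` {1..T} \<Longrightarrow> w < v \<Longrightarrow> w \<le> s"
    and above: "\<And>w. w \<in> critical_values \<union> D ` {1..T} \<Longrightarrow> v < w \<Longrightarrow> s \<le> w"
  shows "replace_value D v s \<in> scenarios"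
proof -
  let ?D' = "replace_value D v s"
  have mono: "\<forall>t\<in>{1..<T}. D t \<le> D (t + 1)"
    and bounds: "\<forall>t\<in>{1..T}. Dhat t - Delta t \<le> D t \<and> D t \<le> Dhat t + Delta t"
    and budget: "card {t\<in>{1..T}. D t \<noteq> Dhat t} \<le> Gam"
    using D by (auto simp: Ud_def)
  have "?D' t \<le> ?D' (t + 1)" if "t \<in> {1..<T}" for t
  proof -
    have "D t \<in> D ` {1..T}" "D (t + 1) \<in> D ` {1..T}" "D t \<le> D (t + 1)"
      using that mono by auto
    with below[of "D t"] above[of "D (t + 1)"] show ?thesis
      by (cases "D t = v"; cases "D (t + 1) = v") (auto simp: replace_value_def)
  qed
  moreover have "Dhat t - Delta t \<le> ?D' t \<and> ?D' t \<le> Dhat t + Delta t" if t: "t \<in> {1..T}" for t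
  proof (cases "D t = v")
    case True
    have "Dhat t - Delta t \<le> v" "v \<le> Dhat t + Delta t"
      using bounds t True by auto
    moreover have "Dhat t - Delta t \<noteq> v" "Dhat t + Delta t \<noteq> v"
      using v critical_values_memI[OF t] by auto
    ultimately have "Dhat t - Delta t < v" "v < Dhat t + Delta t"
      by simp_all
    with below[of "Dhat t - Delta t"] above[of "Dhat t + Delta t"] critical_values_memI[OF t]
    have "Dhat t - Delta t \<le> s" "s \<le> Dhat t + Delta t"
      by auto
    then show ?thesis using True by (simp add: replace_value_def)
  next
    case False
    then show ?thesis using bounds t by (simp add: replace_value_def)
  qed
  moreover have "card {t\<in>{1..T}. ?D' t \<noteq> Dhat t} \<le> Gam"
  proof -
    have "{t\<in>{1..T}. ?D' t \<noteq> Dhat t} \<subseteq> {t\<in>{1..T}. D t \<noteq> Dhat t}"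
      using v critical_values_memI(2) by (auto simp: replace_value_def)
    then have "card {t\<in>{1..T}. ?D' t \<noteq> Dhat t} \<le> card {t\<in>{1..T}. D t \<noteq> Dhat t}"
      by (rule card_mono[rotated]) simp
    with budget show ?thesis by linarith
  qed
  ultimately show ?thesis by (simp add: Ud_def)
qed

lemma off_values_replace_value_psubset:
  assumes "v \<in> off_values D" "s \<in> critical_values \<union> D ` {1..T}" "s \<noteq> v"
  shows "off_values (replace_value D v s) \<subset> off_values D"
proof -
  have "off_values (replace_value D v s) \<subseteq> off_values D - {v}"
    using assms by (auto simp: off_values_def replace_value_def)
  then show ?thesis using assms(1) by blast
qed

lemma ex_better_scenario_fewer_off_values:
  assumes D: "D \<in> scenarios" and v: "v \<in> off_values D"
  obtains D' where "D' \<in> scenarios" "cost D \<le> cost D'" "off_values D' \<subset> off_values D"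
proof -
  let ?W = "critical_values \<union> D ` {1..T}"
  have fin: "finite ?W" using finite_critical_values by simp
  obtain k where k: "k \<in> {1..T}" "D k = v" and vc: "v \<notin> critical_values"
    using v by (auto simp: off_values_def)
  have "Dhat k - Delta k \<le> v" "v \<le> Dhat k + Delta k"
    using D k by (auto simp: Ud_def)
  moreover have "Dhat k - Delta k \<noteq> v" "Dhat k + Delta k \<noteq> v"
    using vc critical_values_memI[OF k(1)] by auto
  ultimately have lt: "Dhat k - Delta k < v" "v < Dhat k + Delta k"
    by simp_all
  have mem: "Dhat k - Delta k \<in> ?W" "Dhat k + Delta k \<in> ?W"
    using critical_values_memI[OF k(1)] by auto
  obtain lo where lo: "lo \<in> ?W" "lo < v" "\<And>w. w \<in> ?W \<Longrightarrow> w < v \<Longrightarrow> w \<le> lo"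
    using finite_has_nearest_below[OF fin mem(1) lt(1)] by blast
  obtain up where up: "up \<in> ?W" "v < up" "\<And>w. w \<in> ?W \<Longrightarrow> v < w \<Longrightarrow> up \<le> w"
    using finite_has_nearest_above[OF fin mem(2) lt(2)] by blast
  have lo_mem: "replace_value D v lo \<in> scenarios"
    using lo(2) by (intro replace_value_mem_scenarios[OF D vc lo(3)]) auto
  have up_mem: "replace_value D v up \<in> scenarios"
    using up(2) by (intro replace_value_mem_scenarios[OF D vc _ up(3)]) auto
  have lo_off: "off_values (replace_value D v lo) \<subset> off_values D"
    using off_values_replace_value_psubset[OF v] lo by blast
  have up_off: "off_values (replace_value D v up) \<subset> off_values D"
    using off_values_replace_value_psubset[OF v] up by blast
  have "convex_on {lo..up} (\<lambda>s. cost (replace_value D v s))"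
    using convex_on_cost_replace_value by (rule convex_on_subset) auto
  from convex_on_le_max[OF this, of v] lo up
  have "cost D \<le> max (cost (replace_value D v lo)) (cost (replace_value D v up))"
    by simp
  then show thesis
    using that[OF lo_mem _ lo_off] that[OF up_mem _ up_off] by linarith
qed

lemma ex_dominating_critical_scenario:
  "D \<in> scenarios \<Longrightarrow> \<exists>D'\<in>scenarios. cost D \<le> cost D' \<and> off_values D' = {}"
proof (induction "card (off_values D)" arbitrary: D rule: less_induct)
  case less
  show ?case
  proof (cases "off_values D = {}")
    case False
    then obtain v where "v \<in> off_values D" by blast
    with less.prems obtain D' where D': "D' \<in> scenarios" "cost D \<le> cost D'"
        "off_values D' \<subset> off_values D"
      by (rule ex_better_scenario_fewer_off_values)
    have "card (off_values D') < card (off_values D)"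
      using D'(3) finite_off_values by (rule psubset_card_mono[rotated])
    with less.hyps D'(1) obtain D'' where "D'' \<in> scenarios" "cost D' \<le> cost D''" "off_values D'' = {}"
      by blast
    with D'(2) show ?thesis by (meson order_trans)
  qed (use less.prems in blast)
qed

lemma restrict_mem_scenarios:
  assumes "D \<in> scenarios"
  shows "restrict D {1..T} \<in> scenarios"
proof -
  have "{t\<in>{1..T}. restrict D {1..T} t \<noteq> Dhat t} = {t\<in>{1..T}. D t \<noteq> Dhat t}"
    by auto
  with assms show ?thesis by (auto simp: Ud_def)
qed

lemma cost_restrict: "cost (restrict D {1..T}) = cost D"
  by (auto simp: total_cost_def intro: sum.cong)

lemma off_values_restrict: "off_values (restrict D {1..T}) = off_values D"
  by (auto simp: off_values_def)

lemma ex_worst_scenario_critical: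
  assumes "scenarios \<noteq> {}"
  obtains Dstar where "Dstar \<in> scenarios" "\<And>D. D \<in> scenarios \<Longrightarrow> cost D \<le> cost Dstar"
    "off_values Dstar = {}"
proof -
  \<comment> \<open>Restricting to the periods \<open>1..T\<close> changes neither feasibility nor cost and makes the
    candidate set finite.\<close>
  define S where "S = (\<Pi>\<^sub>E t\<in>{1..T}. critical_values) \<inter> {D\<in>scenarios. off_values D = {}}"
  have restrict_S: "restrict D {1..T} \<in> S" if "D \<in> scenarios" "off_values D = {}" for D
    using that restrict_mem_scenarios off_values_restrict
    by (auto simp: S_def off_values_def)
  have "finite S"
    unfolding S_def by (intro finite_Int disjI1 finite_PiE finite_critical_values) simp
  moreover have "S \<noteq> {}"
    using assms ex_dominating_critical_scenario restrict_S by blast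
  ultimately have "Max (cost ` S) \<in> cost ` S"
    by simp
  then obtain Dstar where Dstar: "Dstar \<in> S" "cost Dstar = Max (cost ` S)"
    by (metis imageE)
  show thesis
  proof (rule that)
    fix D assume "D \<in> scenarios"
    then obtain D' where D': "D' \<in> scenarios" "cost D \<le> cost D'" "off_values D' = {}"
      using ex_dominating_critical_scenario by blast
    have "cost D' = cost (restrict D' {1..T})" by (rule cost_restrict[symmetric])
    also have "\<dots> \<le> cost Dstar"
      using Dstar restrict_S[OF D'(1,3)] \<open>finite S\<close> by simp
    finally show "cost D \<le> cost Dstar" using D'(2) by linarith
  qed (use Dstar in \<open>auto simp: S_def\<close>)
qed

lemma cand_eq_Icc_Int_critical_values:
  "cand T Dhat Delta k = {Dhat k - Delta k..Dhat k + Delta k} \<inter> critical_values"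
  by (simp add: cand_def critical_values_def)

end

theorem lemma3:
  fixes T m Gam :: nat
    and cP cI cB bP :: real
    and A :: "nat \<Rightarrow> nat \<Rightarrow> real" and b :: "nat \<Rightarrow> real"
    and x Dhat Delta :: "nat \<Rightarrow> real"
  assumes "T \<ge> 1"
    and "\<forall>t\<in>{1..T}. 0 \<le> Dhat t"
    and "\<forall>t\<in>{1..<T}. Dhat t \<le> Dhat (t + 1)"
    and "\<forall>t\<in>{1..T}. 0 \<le> Delta t \<and> Delta t \<le> Dhat t"
    and "Gam \<le> T"
    and "x \<in> plan_set T m A b"
  shows "\<exists>Dstar\<in>Ud T Dhat Delta Gam.
           (\<forall>D\<in>Ud T Dhat Delta Gam. total_cost T cP cI cB bP x D \<le> total_cost T cP cI cB bP x Dstar) \<and>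
           (\<forall>k\<in>{1..T}. Dstar k \<in> cand T Dhat Delta k)"
proof -
  have "Dhat \<in> Ud T Dhat Delta Gam"
    using assms(3,4) by (auto simp: Ud_def)
  then obtain Dstar where Dstar: "Dstar \<in> Ud T Dhat Delta Gam"
      "\<And>D. D \<in> Ud T Dhat Delta Gam \<Longrightarrow> total_cost T cP cI cB bP x D \<le> total_cost T cP cI cB bP x Dstar"
      "off_values T Dhat Delta Dstar = {}"
    using ex_worst_scenario_critical by blast
  have "Dstar k \<in> cand T Dhat Delta k" if "k \<in> {1..T}" for k
    using Dstar(1,3) that
    by (auto simp: cand_eq_Icc_Int_critical_values Ud_def off_values_def)
  with Dstar(1,2) show ?thesis by blast
qed

end
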